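(* All framed hyperbolic $3$-manifolds $(\mathbb{H}^3/\Gamma,f)\in\mathcal{H}$ such that $\Omega(\Gamma)\ne\varnothing$ lie in the same path component of $\mathcal{H}$ (namely that of $(\mathbb{H}^3,\mathcal{O}_O)$).
   Context: A Kleinian group is a discrete torsion-free subgroup $\Gamma\le\mathrm{PSL}_2\mathbb{C}$; its limit set $\Lambda(\Gamma)$ is $\overline{\Gamma\cdot x}\cap S^2_\infty$ for any $x\in\mathbb{H}^3$, and $\Omega(\Gamma)=S^2_\infty\setminus\Lambda(\Gamma)$ is its domain of discontinuity. $\mathcal{H}$ is the set of framed hyperbolic $3$-manifolds $(M,f)$ ($f$ a positively oriented orthonormal frame) modulo frame-preserving orientation-preserving isometry, with the geometric topology, i.e. the Chabauty topology transported via the bijection $\Gamma\mapsto(\mathbb{H}^3/\Gamma,\pi_\Gamma(\mathcal{O}_O))$, where $\mathcal{O}_O$ is a fixed frame of $\mathbb{H}^3$ at a fixed point $O$ ($\Gamma_n\to\Gamma$ iff accumulation points of sequences $\psi_n\in\Gamma_n$ lie in $\Gamma$ and every element of $\Gamma$ is a limit of some $\psi_n\in\Gamma_n$). *)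

theory Defs
  imports "HOL-Analysis.Analysis"
begin

text \<open>PSL(2,C) is modelled through SL(2,C): a subgroup of PSL(2,C) is identified with its
  preimage in SL(2,C) (a subgroup containing -I).  Matrices are complex^2^2.\<close>

type_synonym cmat = "complex^2^2"

definition SL2C :: "cmat set" where
  "SL2C = {A. det A = 1}"

definition mpow :: "cmat \<Rightarrow> nat \<Rightarrow> cmat" where
  "mpow A n = (((**) A) ^^ n) (mat 1)"

definition pm_one :: "cmat set" where
  "pm_one = {mat 1, - mat 1}"

definition psl_subgroup :: "cmat set \<Rightarrow> bool" where
  "psl_subgroup G \<longleftrightarrow> G \<subseteq> SL2C \<and> pm_one \<subseteq> G \<and>
     (\<forall>A\<in>G. \<forall>B\<in>G. A ** B \<in> G) \<and> (\<forall>A\<in>G. matrix_inv A \<in> G)"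

definition kleinian :: "cmat set \<Rightarrow> bool" where
  "kleinian G \<longleftrightarrow> psl_subgroup G \<and> (\<forall>A. \<not> A islimpt G) \<and>
     (\<forall>A\<in>G. \<forall>n>0. mpow A n \<in> pm_one \<longrightarrow> A \<in> pm_one)"

text \<open>Upper half-space model: a point (z,t) with t > 0; Poincare extension of the Moebius
  map of A.\<close>
definition hyp_act :: "cmat \<Rightarrow> complex \<times> real \<Rightarrow> complex \<times> real" where
  "hyp_act A p = (let z = fst p; t = snd p;
      a = A$1$1; b = A$1$2; c = A$2$1; d = A$2$2;
      D = (cmod (c*z + d))^2 + (cmod c)^2 * t^2
    in (((a*z + b) * cnj (c*z + d) + a * cnj c * of_real (t^2)) / of_real D, t / D))"

definition base_point :: "complex \<times> real" where
  "base_point = (0, 1)"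

text \<open>Riemann sphere = complex option (None = infinity).  Limit set = closure of the orbit of
  the base point in the compactified upper half-space, intersected with the sphere at infinity:
  a finite point xi is a limit point iff (xi,0) lies in the Euclidean closure of the orbit;
  infinity is a limit point iff the orbit is unbounded.\<close>
definition limit_set :: "cmat set \<Rightarrow> complex option set" where
  "limit_set G =
     {Some \<xi> | \<xi>. (\<xi>, 0) \<in> closure ((\<lambda>A. hyp_act A base_point) ` G)}
     \<union> (if bounded ((\<lambda>A. hyp_act A base_point) ` G) then {} else {None})"

definition domain_of_discontinuity :: "cmat set \<Rightarrow> complex option set" where
  "domain_of_discontinuity G = UNIV - limit_set G"

definition chabauty_conv :: "(nat \<Rightarrow> cmat set) \<Rightarrow> cmat set \<Rightarrow> bool" where
  "chabauty_conv Gs G \<longleftrightarrow>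
     (\<forall>\<psi> r A. (\<forall>n. \<psi> n \<in> Gs n) \<and> strict_mono r \<and> (\<psi> \<circ> r) \<longlonglongrightarrow> A \<longrightarrow> A \<in> G) \<and>
     (\<forall>A\<in>G. \<exists>\<psi>. (\<forall>n. \<psi> n \<in> Gs n) \<and> \<psi> \<longlonglongrightarrow> A)"

text \<open>A path in the space of Kleinian groups with the geometric topology (sequential
  continuity; the Chabauty topology is metrizable).\<close>
definition geom_path :: "(real \<Rightarrow> cmat set) \<Rightarrow> bool" where
  "geom_path \<gamma> \<longleftrightarrow> (\<forall>t\<in>{0..1}. kleinian (\<gamma> t)) \<and>
     (\<forall>t\<in>{0..1}. \<forall>s. (\<forall>n. s n \<in> {0..1}) \<and> s \<longlonglongrightarrow> t \<longrightarrow> chabauty_conv (\<gamma> \<circ> s) (\<gamma> t))"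

end

theory Submission
  imports Defs
begin

text \<open>If a point of the sphere lies outside the limit set, conjugate the group, along a path of
  invertible matrices, by a rotation about the base point that moves this point to \<open>\<infinity>\<close>.  The orbit
  of the base point is then bounded, so it lies in a box of height and radius \<open>R\<close>.  Now conjugate
  by the dilations \<open>z \<mapsto> m z\<close> with \<open>m \<rightarrow> 0\<close>.  An element of the original group whose dilate
  stays bounded has bounded diagonal and a lower left entry of order \<open>m\<close>; by the box condition its
  upper right entry is bounded too.  By discreteness one such element recurs infinitely often; it
  is upper triangular, i.e. fixes \<open>\<infinity>\<close>, and with a bounded orbit this forces finite order, hence
  \<open>\<plusminus>1\<close> by torsion-freeness.  So the dilated groups converge geometrically to the trivial group.\<close>

lemma matrix_inv_eqI:
  fixes A :: "'a::semiring_1^'n^'m" and B :: "'a^'m^'n"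
  assumes "A ** B = mat 1" and "B ** A = mat 1"
  shows "matrix_inv A = B"
proof -
  have inv: "A ** matrix_inv A = mat 1 \<and> matrix_inv A ** A = mat 1"
    unfolding matrix_inv_def by (rule someI[of _ B]) (use assms in blast)
  have "matrix_inv A = matrix_inv A ** (A ** B)"
    using assms(1) by simp
  also have "\<dots> = B"
    using inv by (simp add: matrix_mul_assoc)
  finally show ?thesis .
qed

lemma
  fixes A :: "'a::semiring_1^'n^'m"
  assumes "invertible A"
  shows matrix_inv_right: "A ** matrix_inv A = mat 1"
    and matrix_inv_left: "matrix_inv A ** A = mat 1"
  using someI_ex[OF assms[unfolded invertible_def]] by (simp_all add: matrix_inv_def)

lemma invertible_matrix_inv: "invertible A \<Longrightarrow> invertible (matrix_inv A)"
  using invertible_def matrix_inv_left matrix_inv_right by blast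

lemma matrix_inv_matrix_inv: "invertible A \<Longrightarrow> matrix_inv (matrix_inv A) = A"
  by (intro matrix_inv_eqI matrix_inv_left matrix_inv_right)

lemma matrix_inv_mult:
  fixes A B :: "'a::semiring_1^'n^'n"
  assumes "invertible A" and "invertible B"
  shows "matrix_inv (A ** B) = matrix_inv B ** matrix_inv A"
proof (rule matrix_inv_eqI)
  have "A ** B ** (matrix_inv B ** matrix_inv A) = A ** (B ** matrix_inv B) ** matrix_inv A"
    by (simp add: matrix_mul_assoc)
  then show "A ** B ** (matrix_inv B ** matrix_inv A) = mat 1"
    using assms by (simp add: matrix_inv_right)
  have "matrix_inv B ** matrix_inv A ** (A ** B) = matrix_inv B ** (matrix_inv A ** A) ** B"
    by (simp add: matrix_mul_assoc)
  then show "matrix_inv B ** matrix_inv A ** (A ** B) = mat 1"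
    using assms by (simp add: matrix_inv_left)
qed

definition conj_by :: "'a::semiring_1^'n^'n \<Rightarrow> 'a^'n^'n \<Rightarrow> 'a^'n^'n" where
  "conj_by C g = C ** g ** matrix_inv C"

lemma conj_by_id: "conj_by (mat 1) g = (g :: 'a::semiring_1^'n^'n)"
  by (simp add: conj_by_def matrix_inv_eqI[of "mat 1" "mat 1"])

context
  fixes C :: "'a::semiring_1^'n^'n"
  assumes C: "invertible C"
begin

lemma conj_by_mult: "conj_by C g ** conj_by C h = conj_by C (g ** h)"
proof -
  have "conj_by C g ** conj_by C h = C ** g ** (matrix_inv C ** C) ** h ** matrix_inv C"
    by (simp add: conj_by_def matrix_mul_assoc)
  then show ?thesis
    using C by (simp add: conj_by_def matrix_inv_left matrix_mul_assoc)
qed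

lemma conj_by_mat_1 [simp]: "conj_by C (mat 1) = mat 1"
  using C by (simp add: conj_by_def matrix_inv_right)

lemma conj_by_matrix_inv_conj_by [simp]: "conj_by (matrix_inv C) (conj_by C g) = g"
proof -
  have "conj_by (matrix_inv C) (conj_by C g) = (matrix_inv C ** C) ** g ** (matrix_inv C ** C)"
    using C by (simp add: conj_by_def matrix_inv_matrix_inv matrix_mul_assoc)
  then show ?thesis
    using C by (simp add: matrix_inv_left)
qed

lemma conj_by_conj_by_matrix_inv [simp]: "conj_by C (conj_by (matrix_inv C) g) = g"
proof -
  have "conj_by C (conj_by (matrix_inv C) g) = (C ** matrix_inv C) ** g ** (C ** matrix_inv C)"
    using C by (simp add: conj_by_def matrix_inv_matrix_inv matrix_mul_assoc)
  then show ?thesis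
    using C by (simp add: matrix_inv_right)
qed

lemma conj_by_conj_by:
  "invertible D \<Longrightarrow> conj_by C (conj_by D g) = conj_by (C ** D) g"
  using C by (simp add: conj_by_def matrix_inv_mult matrix_mul_assoc)

lemma matrix_inv_conj_by:
  "invertible g \<Longrightarrow> matrix_inv (conj_by C g) = conj_by C (matrix_inv g)"
  by (rule matrix_inv_eqI) (simp_all add: conj_by_mult matrix_inv_right matrix_inv_left)

end

lemma conj_by_uminus: "conj_by C (- g) = - conj_by (C :: 'a::ring_1^'n^'n) g"
  by (simp add: conj_by_def matrix_matrix_mult_def vec_eq_iff sum_negf)

lemma det_conj_by:
  fixes C :: "'a::field^'n^'n"
  assumes "invertible C"
  shows "det (conj_by C g) = det g"
proof -
  have "det C * det (matrix_inv C) = 1"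
    using assms by (metis det_I det_mul matrix_inv_right)
  then show ?thesis
    by (simp add: conj_by_def det_mul)
qed

lemma norm_le_sum_norm_nth: "norm (x::'a::real_normed_vector^'n) \<le> (\<Sum>i\<in>UNIV. norm (x$i))"
  unfolding norm_vec_def by (rule L2_set_le_sum) simp

lemma bounded_entries: "bounded {A::'a::real_normed_vector^'n^'m. \<forall>i j. norm (A$i$j) \<le> K}"
  unfolding bounded_iff
proof (intro exI ballI)
  fix A :: "'a^'n^'m"
  assume A: "A \<in> {A. \<forall>i j. norm (A$i$j) \<le> K}"
  have row: "norm (A$i) \<le> CARD('n) * K" for i
    by (rule order_trans[OF norm_le_sum_norm_nth], rule sum_bounded_above) (use A in auto)
  show "norm A \<le> CARD('m) * (CARD('n) * K)"
    by (rule order_trans[OF norm_le_sum_norm_nth], rule sum_bounded_above) (rule row)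
qed

definition mat2 :: "complex \<Rightarrow> complex \<Rightarrow> complex \<Rightarrow> complex \<Rightarrow> cmat" where
  "mat2 a b c d = vector [vector [a, b], vector [c, d]]"

lemma mat2_nth [simp]:
  "mat2 a b c d $1$1 = a" "mat2 a b c d $1$2 = b" "mat2 a b c d $2$1 = c" "mat2 a b c d $2$2 = d"
  by (simp_all add: mat2_def)

lemma cmat_eq_iff: "(A::cmat) = B \<longleftrightarrow> A$1$1 = B$1$1 \<and> A$1$2 = B$1$2 \<and> A$2$1 = B$2$1 \<and> A$2$2 = B$2$2"
  by (auto simp: vec_eq_iff forall_2)

lemma cmat_mult_nth [simp]:
  "((A::cmat) ** (B::cmat))$1$1 = A$1$1 * B$1$1 + A$1$2 * B$2$1"
  "((A::cmat) ** (B::cmat))$1$2 = A$1$1 * B$1$2 + A$1$2 * B$2$2"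
  "((A::cmat) ** (B::cmat))$2$1 = A$2$1 * B$1$1 + A$2$2 * B$2$1"
  "((A::cmat) ** (B::cmat))$2$2 = A$2$1 * B$1$2 + A$2$2 * B$2$2"
  by (simp_all add: matrix_matrix_mult_def sum_2)

lemma cmat_mat_nth [simp]:
  "(mat k :: cmat)$1$1 = k" "(mat k :: cmat)$1$2 = 0" "(mat k :: cmat)$2$1 = 0" "(mat k :: cmat)$2$2 = k"
  by (simp_all add: mat_def)

lemma matrix_inv_cmat:
  assumes "det (A::cmat) \<noteq> 0"
  shows "matrix_inv A = mat2 (A$2$2 / det A) (- A$1$2 / det A) (- A$2$1 / det A) (A$1$1 / det A)"
proof -
  define \<Delta> where "\<Delta> = det A"
  have "\<Delta> \<noteq> 0" and "A$1$1 * A$2$2 - A$1$2 * A$2$1 = \<Delta>"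
    using assms by (simp_all add: \<Delta>_def det_2)
  then show ?thesis
    unfolding \<Delta>_def[symmetric]
    by (intro matrix_inv_eqI) (simp_all add: cmat_eq_iff field_simps)
qed

lemma matrix_inv_SL2: "det (A::cmat) = 1 \<Longrightarrow> matrix_inv A = mat2 (A$2$2) (- A$1$2) (- A$2$1) (A$1$1)"
  by (simp add: matrix_inv_cmat)

lemma tendsto_matrix_mult:
  fixes f :: "'x \<Rightarrow> 'a::real_normed_algebra_1^'n^'m" and g :: "'x \<Rightarrow> 'a^'k^'n"
  assumes "(f \<longlongrightarrow> A) F" and "(g \<longlongrightarrow> B) F"
  shows "((\<lambda>x. f x ** g x) \<longlongrightarrow> A ** B) F"
  unfolding matrix_matrix_mult_def
  by (intro vec_tendstoI) (simp add: tendsto_sum tendsto_mult tendsto_vec_nth assms)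

lemma tendsto_mat2:
  assumes "(a \<longlongrightarrow> a0) F" "(b \<longlongrightarrow> b0) F" "(c \<longlongrightarrow> c0) F" "(d \<longlongrightarrow> d0) F"
  shows "((\<lambda>x. mat2 (a x) (b x) (c x) (d x)) \<longlongrightarrow> mat2 a0 b0 c0 d0) F"
proof -
  have "((\<lambda>x. mat2 (a x) (b x) (c x) (d x) $ i $ j) \<longlongrightarrow> mat2 a0 b0 c0 d0 $ i $ j) F" for i j :: 2
    using exhaust_2[of i] exhaust_2[of j] by (auto simp: assms)
  then show ?thesis
    by (intro vec_tendstoI)
qed

lemma tendsto_det_cmat: "(f \<longlongrightarrow> (A::cmat)) F \<Longrightarrow> ((\<lambda>x. det (f x)) \<longlongrightarrow> det A) F"
  unfolding det_2 by (intro tendsto_intros tendsto_vec_nth)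

lemma tendsto_matrix_inv_cmat:
  assumes f: "(f \<longlongrightarrow> (A::cmat)) F" and A: "det A \<noteq> 0"
  shows "((\<lambda>x. matrix_inv (f x)) \<longlongrightarrow> matrix_inv A) F"
proof -
  have det: "((\<lambda>x. det (f x)) \<longlongrightarrow> det A) F"
    using f by (rule tendsto_det_cmat)
  have "((\<lambda>x. mat2 (f x$2$2 / det (f x)) (- f x$1$2 / det (f x)) (- f x$2$1 / det (f x)) (f x$1$1 / det (f x)))
          \<longlongrightarrow> matrix_inv A) F"
    unfolding matrix_inv_cmat[OF A]
    by (intro tendsto_mat2 tendsto_intros tendsto_vec_nth f det A)
  moreover have "\<forall>\<^sub>F x in F. det (f x) \<noteq> 0"
    using tendsto_imp_eventually_ne[OF det A] .
  ultimately show ?thesis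
    by (rule Lim_transform_eventually[OF _ eventually_mono]) (simp add: matrix_inv_cmat)
qed

lemma tendsto_conj_by_cmat:
  assumes "(C \<longlongrightarrow> C0) F" and "(g \<longlongrightarrow> g0) F" and "invertible (C0::cmat)"
  shows "((\<lambda>x. conj_by (C x) (g x)) \<longlongrightarrow> conj_by C0 g0) F"
  using assms unfolding conj_by_def invertible_det_nz
  by (intro tendsto_matrix_mult tendsto_matrix_inv_cmat)

lemma mpow_0 [simp]: "mpow A 0 = mat 1"
  by (simp add: mpow_def)

lemma mpow_Suc: "mpow A (Suc n) = A ** mpow A n"
  by (simp add: mpow_def)

lemma mpow_add: "mpow A (m + n) = mpow A m ** mpow A n"
  by (induction m) (simp_all add: mpow_Suc matrix_mul_assoc)

lemma mpow_conj_by: "invertible C \<Longrightarrow> mpow (conj_by C g) n = conj_by C (mpow g n)"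
  by (induction n) (simp_all add: mpow_Suc conj_by_mult)

lemma conj_by_pm_one: "invertible C \<Longrightarrow> g \<in> pm_one \<Longrightarrow> conj_by C g = g"
  by (auto simp: pm_one_def conj_by_uminus)

lemma conj_by_in_pm_one_iff: "invertible C \<Longrightarrow> conj_by C g \<in> pm_one \<longleftrightarrow> g \<in> pm_one"
  by (metis conj_by_matrix_inv_conj_by conj_by_pm_one invertible_matrix_inv)

lemma kleinian_det: "kleinian G \<Longrightarrow> g \<in> G \<Longrightarrow> det g = 1"
  by (auto simp: kleinian_def psl_subgroup_def SL2C_def)

lemma kleinian_invertible: "kleinian G \<Longrightarrow> g \<in> G \<Longrightarrow> invertible g"
  by (simp add: invertible_det_nz kleinian_det)

lemma kleinian_mult: "kleinian G \<Longrightarrow> g \<in> G \<Longrightarrow> h \<in> G \<Longrightarrow> g ** h \<in> G"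
  by (auto simp: kleinian_def psl_subgroup_def)

lemma kleinian_matrix_inv: "kleinian G \<Longrightarrow> g \<in> G \<Longrightarrow> matrix_inv g \<in> G"
  by (auto simp: kleinian_def psl_subgroup_def)

lemma kleinian_pm_one_subset: "kleinian G \<Longrightarrow> pm_one \<subseteq> G"
  by (auto simp: kleinian_def psl_subgroup_def)

lemma kleinian_mat_1: "kleinian G \<Longrightarrow> mat 1 \<in> G"
  by (auto simp: pm_one_def dest: kleinian_pm_one_subset)

lemma kleinian_mpow: "kleinian G \<Longrightarrow> g \<in> G \<Longrightarrow> mpow g n \<in> G"
  by (induction n) (simp_all add: mpow_Suc kleinian_mult kleinian_mat_1)

lemma kleinian_torsion_free: "kleinian G \<Longrightarrow> g \<in> G \<Longrightarrow> n > 0 \<Longrightarrow> mpow g n \<in> pm_one \<Longrightarrow> g \<in> pm_one"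
  by (auto simp: kleinian_def)

lemma kleinian_closed: "kleinian G \<Longrightarrow> closed G"
  by (auto simp: kleinian_def closed_limpt)

lemma kleinian_pm_one: "kleinian pm_one"
proof -
  have "det (- mat 1 :: cmat) = 1" "(- mat 1 :: cmat) ** - mat 1 = mat 1"
    "matrix_inv (mat 1 :: cmat) = mat 1" "matrix_inv (- mat 1 :: cmat) = - mat 1"
    by (simp_all add: det_2 matrix_inv_SL2 cmat_eq_iff)
  then have "psl_subgroup pm_one"
    by (auto simp: psl_subgroup_def pm_one_def SL2C_def)
  moreover have "\<not> A islimpt pm_one" for A
    by (simp add: islimpt_finite pm_one_def)
  ultimately show ?thesis
    by (simp add: kleinian_def)
qed

lemma kleinian_conj_by:
  assumes C: "invertible C" and G: "kleinian G"
  shows "kleinian (conj_by C ` G)"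
proof -
  have "psl_subgroup (conj_by C ` G)"
  proof -
    have "pm_one \<subseteq> conj_by C ` G"
      using C kleinian_pm_one_subset[OF G] by (force intro: rev_image_eqI simp: conj_by_pm_one)
    then show ?thesis
      using G C kleinian_det[OF G] kleinian_mult[OF G] kleinian_matrix_inv[OF G]
        kleinian_invertible[OF G]
      by (auto simp: psl_subgroup_def SL2C_def det_conj_by conj_by_mult matrix_inv_conj_by)
  qed
  moreover have "\<not> A islimpt conj_by C ` G" for A
  proof
    let ?f = "conj_by (matrix_inv C)"
    assume "A islimpt conj_by C ` G"
    moreover have "isCont ?f A"
      unfolding isCont_def using C
      by (intro tendsto_conj_by_cmat tendsto_const tendsto_ident_at invertible_matrix_inv)
    moreover have "\<forall>\<^sub>F B in at A. ?f B \<noteq> ?f A"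
    proof -
      have "?f B \<noteq> ?f A" if "B \<noteq> A" for B
        using that C by (metis conj_by_conj_by_matrix_inv)
      then show ?thesis
        by (simp add: eventually_at_filter)
    qed
    ultimately have "?f A islimpt ?f ` conj_by C ` G"
      by (rule islimpt_isCont_image)
    then show False
      using C G by (simp add: image_image kleinian_def)
  qed
  moreover have "\<forall>g\<in>conj_by C ` G. \<forall>n>0. mpow g n \<in> pm_one \<longrightarrow> g \<in> pm_one"
    using C kleinian_torsion_free[OF G] by (auto simp: mpow_conj_by conj_by_in_pm_one_iff)
  ultimately show ?thesis
    by (simp add: kleinian_def)
qed

lemma kleinian_finite_bounded_entries:
  assumes "kleinian G"
  shows "finite {g\<in>G. \<forall>i j. cmod (g$i$j) \<le> K}"
proof (rule ccontr)
  let ?S = "{g\<in>G. \<forall>i j. cmod (g$i$j) \<le> K}"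
  assume "infinite ?S"
  moreover have "bounded ?S"
    by (rule bounded_subset[OF bounded_entries]) auto
  ultimately obtain A where "A islimpt ?S"
    using bounded_infinite_imp_islimpt[of ?S ?S] by blast
  then have "A islimpt G"
    by (rule islimpt_subset) auto
  with assms show False
    by (auto simp: kleinian_def)
qed

section \<open>Geometric convergence\<close>

lemma limit_eq_frequent_value:
  fixes f :: "'a \<Rightarrow> 'b::t2_space"
  assumes "(f \<longlongrightarrow> a) F" and "\<exists>\<^sub>F x in F. f x = b"
  shows "a = b"
  using assms tendsto_imp_eventually_ne[OF assms(1)] by (auto simp: frequently_def)

lemma eventually_in_finite_imp_frequently_eq:
  assumes "finite S" and "\<forall>\<^sub>F x in F. f x \<in> S" and "F \<noteq> bot"
  shows "\<exists>v\<in>S. \<exists>\<^sub>F x in F. f x = v"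
proof (rule ccontr)
  assume "\<not> ?thesis"
  then have "\<forall>\<^sub>F x in F. \<forall>v\<in>S. f x \<noteq> v"
    using assms(1) by (simp add: not_frequently eventually_ball_finite)
  with assms(2) have "\<forall>\<^sub>F x in F. False"
    by eventually_elim blast
  with assms(3) show False
    by simp
qed

lemma eventually_invertible_cmat:
  assumes "(C \<longlongrightarrow> C0) F" and "invertible (C0::cmat)"
  shows "\<forall>\<^sub>F x in F. invertible (C x)"
  using tendsto_imp_eventually_ne[OF tendsto_det_cmat[OF assms(1)]] assms(2)
  by (simp add: invertible_det_nz)

lemma chabauty_conv_eventually_cong:
  assumes conv: "chabauty_conv Gs G" and ev: "\<forall>\<^sub>F n in sequentially. Gs n = Hs n"
    and ne: "\<And>n. Gs n \<noteq> {}" "\<And>n. Hs n \<noteq> {}"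
  shows "chabauty_conv Hs G"
  unfolding chabauty_conv_def
proof (intro conjI allI impI ballI)
  fix \<psi> r A
  assume "(\<forall>n. \<psi> n \<in> Hs n) \<and> strict_mono r \<and> (\<psi> \<circ> r) \<longlonglongrightarrow> A"
  then have \<psi>: "\<And>n. \<psi> n \<in> Hs n" and r: "strict_mono r" and lim: "(\<psi> \<circ> r) \<longlonglongrightarrow> A"
    by auto
  define \<psi>' where "\<psi>' n = (if \<psi> n \<in> Gs n then \<psi> n else (SOME g. g \<in> Gs n))" for n
  have "\<psi>' n \<in> Gs n" for n
    using ne(1)[of n] by (auto simp: \<psi>'_def intro: someI_ex)
  moreover have "(\<psi>' \<circ> r) \<longlonglongrightarrow> A"
  proof (rule Lim_transform_eventually[OF lim])
    show "\<forall>\<^sub>F n in sequentially. (\<psi> \<circ> r) n = (\<psi>' \<circ> r) n"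
      using eventually_compose_filterlim[OF ev filterlim_subseq[OF r]]
      by eventually_elim (use \<psi> in \<open>simp add: \<psi>'_def\<close>)
  qed
  ultimately show "A \<in> G"
    using conv r unfolding chabauty_conv_def by blast
next
  fix A
  assume "A \<in> G"
  then obtain \<psi> where \<psi>: "\<And>n. \<psi> n \<in> Gs n" and lim: "\<psi> \<longlonglongrightarrow> A"
    using conv unfolding chabauty_conv_def by blast
  define \<psi>' where "\<psi>' n = (if \<psi> n \<in> Hs n then \<psi> n else (SOME g. g \<in> Hs n))" for n
  have "\<psi>' n \<in> Hs n" for n
    using ne(2)[of n] by (auto simp: \<psi>'_def intro: someI_ex)
  moreover have "\<psi>' \<longlonglongrightarrow> A"
  proof (rule Lim_transform_eventually[OF lim])
    show "\<forall>\<^sub>F n in sequentially. \<psi> n = \<psi>' n"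
      using ev by eventually_elim (metis \<psi> \<psi>'_def)
  qed
  ultimately show "\<exists>\<psi>. (\<forall>n. \<psi> n \<in> Hs n) \<and> \<psi> \<longlonglongrightarrow> A"
    by blast
qed

lemma chabauty_conv_conj_by:
  assumes G: "closed G" and C: "C \<longlonglongrightarrow> C0" and C0: "invertible (C0::cmat)"
  shows "chabauty_conv (\<lambda>n. conj_by (C n) ` G) (conj_by C0 ` G)"
  unfolding chabauty_conv_def
proof (intro conjI allI impI ballI)
  fix \<psi> r A
  assume "(\<forall>n. \<psi> n \<in> conj_by (C n) ` G) \<and> strict_mono r \<and> (\<psi> \<circ> r) \<longlonglongrightarrow> A"
  then have \<psi>: "\<And>n. \<psi> n \<in> conj_by (C n) ` G" and r: "strict_mono r" and lim: "(\<psi> \<circ> r) \<longlonglongrightarrow> A"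
    by auto
  have Cr: "(C \<circ> r) \<longlonglongrightarrow> C0"
    using LIMSEQ_subseq_LIMSEQ[OF C r] .
  define g where "g n = conj_by (matrix_inv (C (r n))) (\<psi> (r n))" for n
  have "\<forall>\<^sub>F n in sequentially. g n \<in> G"
    using eventually_invertible_cmat[OF Cr C0] 
  proof eventually_elim
    case (elim n)
    then show ?case
      using \<psi>[of "r n"] by (auto simp: g_def)
  qed
  moreover have "g \<longlonglongrightarrow> conj_by (matrix_inv C0) A"
    unfolding g_def using Cr lim C0
    by (intro tendsto_conj_by_cmat tendsto_matrix_inv_cmat invertible_matrix_inv)
      (simp_all add: o_def invertible_det_nz)
  ultimately have "conj_by (matrix_inv C0) A \<in> G"
    using G by (intro Lim_in_closed_set) auto
  then show "A \<in> conj_by C0 ` G"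
    using C0 by (metis conj_by_conj_by_matrix_inv image_eqI)
next
  fix A
  assume "A \<in> conj_by C0 ` G"
  then obtain g where "g \<in> G" and "A = conj_by C0 g"
    by blast
  then show "\<exists>\<psi>. (\<forall>n. \<psi> n \<in> conj_by (C n) ` G) \<and> \<psi> \<longlonglongrightarrow> A"
    using C C0 by (intro exI[of _ "\<lambda>n. conj_by (C n) g"]) (auto intro: tendsto_conj_by_cmat)
qed

section \<open>Groups whose orbit lies in a box\<close>

lemma hyp_act_base_point:
  "hyp_act g base_point =
    ((g$1$1 * cnj (g$2$1) + g$1$2 * cnj (g$2$2)) / of_real ((cmod (g$2$1))\<^sup>2 + (cmod (g$2$2))\<^sup>2),
     1 / ((cmod (g$2$1))\<^sup>2 + (cmod (g$2$2))\<^sup>2))"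
  by (simp add: hyp_act_def base_point_def Let_def algebra_simps)

lemma bottom_row_norm_pos:
  assumes "det (g::cmat) = 1"
  shows "0 < (cmod (g$2$1))\<^sup>2 + (cmod (g$2$2))\<^sup>2"
proof -
  have "g$2$1 \<noteq> 0 \<or> g$2$2 \<noteq> 0"
    using assms by (auto simp: det_2)
  then show ?thesis
    by (auto simp: add_pos_nonneg add_nonneg_pos)
qed

text \<open>By \<open>hyp_act_base_point\<close>, \<open>orbit_in_box G R\<close> says that the orbit of the base point lies in
  the box of height at most \<open>R\<close> over the disc of radius \<open>R\<close>.\<close>
definition orbit_in_box :: "cmat set \<Rightarrow> real \<Rightarrow> bool" where
  "orbit_in_box G R \<longleftrightarrow> (\<forall>g\<in>G.
     1 \<le> R * ((cmod (g$2$1))\<^sup>2 + (cmod (g$2$2))\<^sup>2) \<and>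
     cmod (g$1$1 * cnj (g$2$1) + g$1$2 * cnj (g$2$2)) \<le> R * ((cmod (g$2$1))\<^sup>2 + (cmod (g$2$2))\<^sup>2))"

lemma bounded_orbit_imp_orbit_in_box:
  assumes G: "kleinian G" and bd: "bounded ((\<lambda>A. hyp_act A base_point) ` G)"
  shows "\<exists>R. orbit_in_box G R"
proof -
  obtain R where R: "\<And>g. g \<in> G \<Longrightarrow> norm (hyp_act g base_point) \<le> R"
    using bd unfolding bounded_iff by blast
  have "orbit_in_box G R"
    unfolding orbit_in_box_def
  proof
    fix g
    assume g: "g \<in> G"
    define N where "N = (cmod (g$2$1))\<^sup>2 + (cmod (g$2$2))\<^sup>2"
    define W where "W = g$1$1 * cnj (g$2$1) + g$1$2 * cnj (g$2$2)"
    have N: "N > 0"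
      unfolding N_def by (rule bottom_row_norm_pos[OF kleinian_det[OF G g]])
    have "norm (W / of_real N, 1 / N) \<le> R"
      using R[OF g] by (simp add: hyp_act_base_point N_def W_def)
    then have "1 / N \<le> R" "cmod W / N \<le> R"
      using N order_trans[OF norm_snd_le] order_trans[OF norm_fst_le] by (fastforce simp: norm_divide)+
    then show "1 \<le> R * N \<and> cmod W \<le> R * N"
      using N by (simp add: field_simps)
  qed
  then show ?thesis ..
qed

lemma orbit_in_box_one_le: "orbit_in_box G R \<Longrightarrow> mat 1 \<in> G \<Longrightarrow> 1 \<le> R"
  by (fastforce simp: orbit_in_box_def)

lemma upper_triangular_entries_bounded:
  assumes G: "kleinian G" and box: "orbit_in_box G R" and u: "u \<in> G" and u21: "u$2$1 = 0"
  shows "cmod (u$i$j) \<le> R\<^sup>2"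
proof -
  have R: "1 \<le> R"
    using orbit_in_box_one_le[OF box kleinian_mat_1[OF G]] .
  have "det u = 1"
    using kleinian_det[OF G u] .
  then have det: "cmod (u$1$1) * cmod (u$2$2) = 1"
    using u21 by (metis det_2 diff_zero mult_zero_right norm_mult norm_one)
  have "matrix_inv u \<in> G"
    using kleinian_matrix_inv[OF G u] .
  then have b11: "1 \<le> R * (cmod (u$1$1))\<^sup>2"
    using box u21 \<open>det u = 1\<close> by (auto simp: orbit_in_box_def matrix_inv_SL2)
  have b22: "1 \<le> R * (cmod (u$2$2))\<^sup>2"
    and b12: "cmod (u$1$2) * cmod (u$2$2) \<le> R * (cmod (u$2$2))\<^sup>2"
    using box u u21 by (auto simp: orbit_in_box_def norm_mult)
  have RR: "R \<le> R\<^sup>2"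
    using power_increasing[of 1 2 R] R by simp
  have sq_le: "x \<le> R" if "x\<^sup>2 \<le> R" for x :: real
    using power2_le_imp_le[OF order_trans[OF that RR]] R by simp
  \<comment> \<open>the lower bounds \<open>b11\<close>, \<open>b22\<close> become upper bounds since \<open>|u\<^sub>1\<^sub>1| |u\<^sub>2\<^sub>2| = 1\<close>\<close>
  have "(cmod (u$1$1))\<^sup>2 \<le> R" "(cmod (u$2$2))\<^sup>2 \<le> R"
    using mult_left_mono[OF b22, of "(cmod (u$1$1))\<^sup>2"] mult_left_mono[OF b11, of "(cmod (u$2$2))\<^sup>2"] det
    by (simp_all add: algebra_simps flip: power_mult_distrib)
  then have d: "cmod (u$1$1) \<le> R" "cmod (u$2$2) \<le> R"
    by (simp_all add: sq_le)
  have "cmod (u$2$2) > 0"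
    using det by (auto intro: ccontr)
  then have "cmod (u$1$2) \<le> R * cmod (u$2$2)"
    using b12 by (simp add: power2_eq_square)
  also have "\<dots> \<le> R\<^sup>2"
    using d R by (simp add: power2_eq_square)
  finally show ?thesis
    using d u21 R RR exhaust_2[of i] exhaust_2[of j] by auto
qed

lemma upper_triangular_in_pm_one:
  assumes G: "kleinian G" and box: "orbit_in_box G R" and v: "v \<in> G" and v21: "v$2$1 = 0"
  shows "v \<in> pm_one"
proof -
  have "mpow v k $2$1 = 0" for k
    by (induction k) (simp_all add: mpow_Suc v21)
  then have "range (mpow v) \<subseteq> {g\<in>G. \<forall>i j. cmod (g$i$j) \<le> R\<^sup>2}"
    using upper_triangular_entries_bounded[OF G box kleinian_mpow[OF G v]] kleinian_mpow[OF G v]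
    by auto
  then have "finite (range (mpow v))"
    using kleinian_finite_bounded_entries[OF G] finite_subset by blast
  then obtain a b where ab: "a < b" "mpow v a = mpow v b"
    by (metis finite_imageD infinite_UNIV_nat inj_def linorder_neqE_nat)
  have "mpow v b = mpow v a ** mpow v (b - a)"
    using ab(1) by (simp flip: mpow_add)
  then have "mpow v (b - a) = matrix_inv (mpow v a) ** mpow v a ** mpow v (b - a)"
    using kleinian_invertible[OF G kleinian_mpow[OF G v]] by (simp add: matrix_inv_left)
  also have "\<dots> = mat 1"
    using ab(2) kleinian_invertible[OF G kleinian_mpow[OF G v]] \<open>mpow v b = _\<close>
    by (metis matrix_inv_left matrix_mul_assoc)
  finally have "mpow v (b - a) \<in> pm_one"
    by (simp add: pm_one_def)
  with kleinian_torsion_free[OF G v, of "b - a"] ab(1) show ?thesis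
    by simp
qed

lemma orbit_in_box_entries_bounded:
  assumes box: "orbit_in_box G R" and g: "g \<in> G" and R: "1 \<le> R"
    and g11: "cmod (g$1$1) \<le> B" and g22: "cmod (g$2$2) \<le> B" and g21: "cmod (g$2$1) \<le> 1 / (2 * R)"
  shows "cmod (g$i$j) \<le> max B (2 * R * (R * (1 + B\<^sup>2) + B)\<^sup>2)"
proof -
  define K where "K = R * (1 + B\<^sup>2) + B"
  define N where "N = (cmod (g$2$1))\<^sup>2 + (cmod (g$2$2))\<^sup>2"
  have B: "0 \<le> B"
    using g11 norm_ge_zero order_trans by blast
  have N1: "1 \<le> R * N" and W: "cmod (g$1$1 * cnj (g$2$1) + g$1$2 * cnj (g$2$2)) \<le> R * N"
    using box g by (auto simp: orbit_in_box_def N_def)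
  have "1 / (2 * R) \<le> 1 / 2"
    using R by (simp add: field_simps)
  then have c1: "cmod (g$2$1) \<le> 1 / 2"
    using g21 by linarith
  \<comment> \<open>a small lower left entry keeps the lower right one away from 0 in \<open>1 \<le> R N\<close>\<close>
  then have "(cmod (g$2$1))\<^sup>2 \<le> cmod (g$2$1)"
    by (simp add: power2_eq_square mult_left_le)
  then have "R * (cmod (g$2$1))\<^sup>2 \<le> R * cmod (g$2$1)"
    using R by (simp add: mult_left_mono)
  also have "\<dots> \<le> 1 / 2"
    using g21 R by (simp add: field_simps)
  finally have d: "1 / 2 \<le> R * (cmod (g$2$2))\<^sup>2"
    using N1 by (simp add: N_def algebra_simps)
  have "cmod (g$1$2 * cnj (g$2$2))
        \<le> cmod (g$1$1 * cnj (g$2$1) + g$1$2 * cnj (g$2$2)) + cmod (g$1$1 * cnj (g$2$1))"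
    using norm_triangle_ineq4[of "g$1$1 * cnj (g$2$1) + g$1$2 * cnj (g$2$2)" "g$1$1 * cnj (g$2$1)"]
    by simp
  also have "\<dots> \<le> R * (1 + B\<^sup>2) + B * 1"
  proof (intro add_mono order_trans[OF W] mult_left_mono)
    have "(cmod (g$2$1))\<^sup>2 \<le> 1" "(cmod (g$2$2))\<^sup>2 \<le> B\<^sup>2"
      using c1 g22 by (auto intro: power_le_one power_mono)
    then show "N \<le> 1 + B\<^sup>2"
      by (simp add: N_def)
    show "cmod (g$1$1 * cnj (g$2$1)) \<le> B * 1"
      unfolding norm_mult complex_mod_cnj using c1 g11 B by (intro mult_mono) auto
  qed (use R in auto)
  finally have "cmod (g$1$2) * cmod (g$2$2) \<le> K"
    by (simp add: K_def norm_mult)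
  then have "(cmod (g$1$2))\<^sup>2 * (R * (cmod (g$2$2))\<^sup>2) \<le> R * K\<^sup>2"
    using R by (simp add: power_mono mult_left_mono flip: power_mult_distrib)
  then have "(cmod (g$1$2))\<^sup>2 * (1 / 2) \<le> R * K\<^sup>2"
    using d by (meson mult_left_mono order_trans zero_le_power2)
  then have sq: "(cmod (g$1$2))\<^sup>2 \<le> 2 * R * K\<^sup>2"
    by linarith
  have "R * 1 \<le> R * (1 + B\<^sup>2)"
    using R by (intro mult_left_mono) auto
  then have "1 \<le> K"
    using R B unfolding K_def by linarith
  then have K1: "1 \<le> K\<^sup>2"
    by (simp add: one_le_power)
  then have M: "1 \<le> 2 * R * K\<^sup>2" "2 * R * K\<^sup>2 \<le> (2 * R * K\<^sup>2)\<^sup>2"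
    using R mult_mono[OF _ K1, of 1 "2 * R"] power_increasing[of 1 2 "2 * R * K\<^sup>2"] by auto
  have g12: "cmod (g$1$2) \<le> 2 * R * K\<^sup>2"
    using power2_le_imp_le[OF order_trans[OF sq M(2)]] M(1) by simp
  show ?thesis
    using exhaust_2[of i] exhaust_2[of j] g11 g22 g12 c1 M(1)
    unfolding K_def by auto
qed

definition dilation :: "real \<Rightarrow> cmat" where
  "dilation m = mat2 (of_real m) 0 0 1"

lemma invertible_dilation: "m \<noteq> 0 \<Longrightarrow> invertible (dilation m)"
  by (simp add: invertible_det_nz det_2 dilation_def)

lemma conj_by_dilation:
  "m \<noteq> 0 \<Longrightarrow> conj_by (dilation m) g = mat2 (g$1$1) (of_real m * g$1$2) (g$2$1 / of_real m) (g$2$2)"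
  by (simp add: conj_by_def matrix_inv_cmat det_2 dilation_def cmat_eq_iff)

lemma lower_left_tendsto_zero_frequently_pm_one:
  assumes G: "kleinian G" and box: "orbit_in_box G R" and q: "\<And>n. q n \<in> G"
    and diag: "\<And>n. cmod (q n$1$1) \<le> B" "\<And>n. cmod (q n$2$2) \<le> B"
    and q21: "(\<lambda>n. q n$2$1) \<longlonglongrightarrow> 0"
  shows "\<exists>v\<in>pm_one. \<exists>\<^sub>F n in sequentially. q n = v"
proof -
  have R: "1 \<le> R"
    using orbit_in_box_one_le[OF box kleinian_mat_1[OF G]] .
  define K where "K = max B (2 * R * (R * (1 + B\<^sup>2) + B)\<^sup>2)"
  have "\<forall>\<^sub>F n in sequentially. cmod (q n$2$1) < 1 / (2 * R)"
    using order_tendstoD(2)[OF tendsto_norm_zero[OF q21]] R by simp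
  then have "\<forall>\<^sub>F n in sequentially. q n \<in> {g\<in>G. \<forall>i j. cmod (g$i$j) \<le> K}"
    by eventually_elim (auto simp: K_def q diag intro!: orbit_in_box_entries_bounded[OF box q R])
  with kleinian_finite_bounded_entries[OF G] obtain v
    where "v \<in> {g\<in>G. \<forall>i j. cmod (g$i$j) \<le> K}" and freq: "\<exists>\<^sub>F n in sequentially. q n = v"
    using eventually_in_finite_imp_frequently_eq trivial_limit_sequentially by blast
  then have v: "v \<in> G"
    by blast
  have "\<exists>\<^sub>F n in sequentially. q n$2$1 = v$2$1"
    using freq by (rule frequently_elim1) simp
  then have "v$2$1 = 0"
    using limit_eq_frequent_value[OF q21] by simp
  then have "v \<in> pm_one"
    by (rule upper_triangular_in_pm_one[OF G box v])
  with freq show ?thesis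
    by blast
qed

lemma dilation_collapse_limit:
  assumes G: "kleinian G" and box: "orbit_in_box G R"
    and \<mu>: "\<And>n. 0 \<le> \<mu> n" "\<mu> \<longlonglongrightarrow> 0"
    and \<phi>: "\<And>n. \<phi> n \<in> (if \<mu> n = 0 then pm_one else conj_by (dilation (\<mu> n)) ` G)"
    and lim: "\<phi> \<longlonglongrightarrow> A"
  shows "A \<in> pm_one"
proof -
  define q where "q n = (if \<mu> n = 0 then \<phi> n else conj_by (matrix_inv (dilation (\<mu> n))) (\<phi> n))" for n
  have q: "q n \<in> G" "\<phi> n = (if \<mu> n = 0 then q n else conj_by (dilation (\<mu> n)) (q n))" for n
    using \<phi>[of n] kleinian_pm_one_subset[OF G] by (auto simp: q_def invertible_dilation)
  have "q n$1$1 = \<phi> n$1$1 \<and> q n$2$2 = \<phi> n$2$2 \<and> q n$2$1 = \<mu> n * \<phi> n$2$1" for n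
  proof (cases "\<mu> n = 0")
    case True
    then have "\<phi> n \<in> pm_one" "q n = \<phi> n"
      using \<phi>[of n] by (simp_all add: q_def)
    then show ?thesis
      by (auto simp: pm_one_def)
  next
    case False
    then show ?thesis
      using q(2)[of n] by (simp add: conj_by_dilation)
  qed
  then have q_nth: "q n$1$1 = \<phi> n$1$1" "q n$2$2 = \<phi> n$2$2" "q n$2$1 = \<mu> n * \<phi> n$2$1" for n
    by simp_all
  obtain B where "\<And>n. norm (\<phi> n) \<le> B"
    using convergent_imp_Bseq[OF convergentI[OF lim]] unfolding Bseq_def by blast
  then have B: "cmod (\<phi> n$i$j) \<le> B" for n i j
    using order_trans[OF Finite_Cartesian_Product.norm_nth_le
      order_trans[OF Finite_Cartesian_Product.norm_nth_le]] by blast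
  have diag: "cmod (q n$1$1) \<le> B" "cmod (q n$2$2) \<le> B" for n
    by (simp_all add: q_nth B)
  have "(\<lambda>n. q n$2$1) \<longlonglongrightarrow> 0"
  proof (rule Lim_null_comparison)
    show "\<forall>\<^sub>F n in sequentially. norm (q n$2$1) \<le> \<mu> n * B"
      by (intro always_eventually allI) (simp add: q_nth norm_mult mult_left_mono \<mu>(1) B)
    show "(\<lambda>n. \<mu> n * B) \<longlonglongrightarrow> 0"
      using \<mu>(2) by (rule tendsto_mult_left_zero)
  qed
  then obtain v where "v \<in> pm_one" and "\<exists>\<^sub>F n in sequentially. q n = v"
    using lower_left_tendsto_zero_frequently_pm_one[where q = q, OF G box q(1) diag] by blast
  then have "\<exists>\<^sub>F n in sequentially. \<phi> n = v"
    by (elim frequently_elim1) (simp add: q(2) conj_by_pm_one invertible_dilation)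
  then show ?thesis
    using limit_eq_frequent_value[OF lim] \<open>v \<in> pm_one\<close> by simp
qed

lemma chabauty_conv_dilation_collapse:
  assumes G: "kleinian G" and box: "orbit_in_box G R" and m: "\<And>n. 0 \<le> m n" "m \<longlonglongrightarrow> 0"
  shows "chabauty_conv (\<lambda>n. if m n = 0 then pm_one else conj_by (dilation (m n)) ` G) pm_one"
  unfolding chabauty_conv_def
proof (intro conjI allI impI ballI)
  fix \<psi> r A
  assume H: "(\<forall>n. \<psi> n \<in> (if m n = 0 then pm_one else conj_by (dilation (m n)) ` G)) \<and>
    strict_mono r \<and> (\<psi> \<circ> r) \<longlonglongrightarrow> A"
  then have H1: "\<psi> n \<in> (if m n = 0 then pm_one else conj_by (dilation (m n)) ` G)" for n
    by blast
  show "A \<in> pm_one"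
  proof (rule dilation_collapse_limit[OF G box])
    show "(m \<circ> r) \<longlonglongrightarrow> 0"
      using H LIMSEQ_subseq_LIMSEQ[OF m(2)] by blast
    show "(\<psi> \<circ> r) \<longlonglongrightarrow> A"
      using H by blast
  qed (simp_all only: comp_apply H1 m(1))
next
  fix A
  assume A: "A \<in> pm_one"
  then have "A \<in> (if m n = 0 then pm_one else conj_by (dilation (m n)) ` G)" for n
    using kleinian_pm_one_subset[OF G]
    by (auto intro!: rev_image_eqI simp: conj_by_pm_one invertible_dilation)
  then show "\<exists>\<psi>. (\<forall>n. \<psi> n \<in> (if m n = 0 then pm_one else conj_by (dilation (m n)) ` G)) \<and> \<psi> \<longlonglongrightarrow> A"
    by (intro exI[of _ "\<lambda>_. A"]) auto
qed

section \<open>Moving a point of the domain of discontinuity to infinity\<close>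

lemma lagrange_identity_complex:
  "((cmod x1)\<^sup>2 + (cmod x2)\<^sup>2) * ((cmod y1)\<^sup>2 + (cmod y2)\<^sup>2) =
   (cmod (x1 * cnj y1 + x2 * cnj y2))\<^sup>2 + (cmod (x1 * y2 - x2 * y1))\<^sup>2"
proof -
  have "complex_of_real (((cmod x1)\<^sup>2 + (cmod x2)\<^sup>2) * ((cmod y1)\<^sup>2 + (cmod y2)\<^sup>2)) =
        complex_of_real ((cmod (x1 * cnj y1 + x2 * cnj y2))\<^sup>2 + (cmod (x1 * y2 - x2 * y1))\<^sup>2)"
    by (simp only: of_real_mult of_real_add complex_norm_square complex_cnj_add complex_cnj_mult
        complex_cnj_diff complex_cnj_cnj) (simp add: algebra_simps)
  then show ?thesis
    by (simp only: of_real_eq_iff)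
qed

lemma dist_orbit_point_boundary:
  fixes g :: cmat
  defines "N \<equiv> (cmod (g$2$1))\<^sup>2 + (cmod (g$2$2))\<^sup>2"
  assumes "det g = 1"
  shows "(dist (hyp_act g base_point) (z, 0))\<^sup>2 * N\<^sup>2
         = (cmod (z * N - (g$1$1 * cnj (g$2$1) + g$1$2 * cnj (g$2$2))))\<^sup>2 + 1"
proof -
  define W where "W = g$1$1 * cnj (g$2$1) + g$1$2 * cnj (g$2$2)"
  have N: "N > 0"
    unfolding N_def by (rule bottom_row_norm_pos[OF assms(2)])
  have eq: "W / of_real N - z = - ((z * N - W) / of_real N)"
    using N by (simp add: field_simps)
  have "(dist (hyp_act g base_point) (z, 0))\<^sup>2 = (dist (W / of_real N) z)\<^sup>2 + (dist (1 / N) 0)\<^sup>2"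
    by (simp add: hyp_act_base_point dist_Pair_Pair N_def W_def)
  also have "\<dots> = (cmod (z * N - W))\<^sup>2 / N\<^sup>2 + 1 / N\<^sup>2"
    using eq by (simp add: dist_norm norm_divide power_divide)
  finally show ?thesis
    using N
    by (simp add: W_def field_simps)
qed

text \<open>A unitary matrix of determinant 1, i.e. a rotation about the base point, whose Moebius
  transformation maps \<open>z\<close> to \<open>\<infinity>\<close>.\<close>
definition rotation_to_infinity :: "complex \<Rightarrow> cmat" where
  "rotation_to_infinity z = (1 / sqrt (1 + (cmod z)\<^sup>2)) *\<^sub>R mat2 (cnj z) 1 (-1) z"

lemma rotation_scale:
  fixes z :: complex
  defines "s \<equiv> 1 / sqrt (1 + (cmod z)\<^sup>2)"
  shows "s > 0" and "s\<^sup>2 * (1 + (cmod z)\<^sup>2) = 1"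
proof -
  have "1 + (cmod z)\<^sup>2 > 0"
    by (simp add: add_pos_nonneg)
  then show "s > 0" "s\<^sup>2 * (1 + (cmod z)\<^sup>2) = 1"
    by (simp_all add: s_def power_divide)
qed

lemma rotation_to_infinity_eq:
  fixes s :: real
  assumes "s = 1 / sqrt (1 + (cmod z)\<^sup>2)"
  shows "rotation_to_infinity z = mat2 (of_real s * cnj z) (of_real s) (- of_real s) (of_real s * z)"
  by (simp add: assms rotation_to_infinity_def cmat_eq_iff) (simp add: scaleR_conv_of_real)

lemma unitary_rows_inner:
  fixes s :: real and x1 x2 y1 y2 z :: complex
  assumes "s\<^sup>2 * (1 + (cmod z)\<^sup>2) = 1"
  shows "(s * (x1 * z + x2)) * cnj (s * (y1 * z + y2)) + (s * (- x1 + x2 * cnj z)) * cnj (s * (- y1 + y2 * cnj z))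
         = x1 * cnj y1 + x2 * cnj y2"
proof -
  have "(complex_of_real s)\<^sup>2 * (1 + z * cnj z) = 1"
    using arg_cong[OF assms, of complex_of_real] by (simp add: complex_norm_square[symmetric])
  moreover have "(s * (x1 * z + x2)) * cnj (s * (y1 * z + y2)) + (s * (- x1 + x2 * cnj z)) * cnj (s * (- y1 + y2 * cnj z))
      = ((complex_of_real s)\<^sup>2 * (1 + z * cnj z)) * (x1 * cnj y1 + x2 * cnj y2)"
    by (simp add: algebra_simps power2_eq_square)
  ultimately show ?thesis
    by simp
qed

lemma unitary_rows_norm:
  fixes s :: real and x1 x2 z :: complex
  assumes "s\<^sup>2 * (1 + (cmod z)\<^sup>2) = 1"
  shows "(cmod (s * (x1 * z + x2)))\<^sup>2 + (cmod (s * (- x1 + x2 * cnj z)))\<^sup>2 = (cmod x1)\<^sup>2 + (cmod x2)\<^sup>2"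
proof -
  have "complex_of_real ((cmod (s * (x1 * z + x2)))\<^sup>2 + (cmod (s * (- x1 + x2 * cnj z)))\<^sup>2)
      = complex_of_real ((cmod x1)\<^sup>2 + (cmod x2)\<^sup>2)"
    unfolding of_real_add complex_norm_square by (rule unitary_rows_inner[OF assms])
  then show ?thesis
    by (simp only: of_real_eq_iff)
qed

lemma conj_by_rotation_to_infinity_rows:
  fixes g :: cmat and z :: complex and s :: real
  assumes s_def: "s = 1 / sqrt (1 + (cmod z)\<^sup>2)"
  defines "h \<equiv> conj_by (rotation_to_infinity z) g"
    and "x1 \<equiv> s * (z * g$2$1 - g$1$1)" and "x2 \<equiv> s * (z * g$2$2 - g$1$2)"
    and "y1 \<equiv> s * (cnj z * g$1$1 + g$2$1)" and "y2 \<equiv> s * (cnj z * g$1$2 + g$2$2)"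
  shows "(cmod (h$2$1))\<^sup>2 + (cmod (h$2$2))\<^sup>2 = (cmod x1)\<^sup>2 + (cmod x2)\<^sup>2"
    and "h$1$1 * cnj (h$2$1) + h$1$2 * cnj (h$2$2) = y1 * cnj x1 + y2 * cnj x2"
proof -
  have s: "s\<^sup>2 * (1 + (cmod z)\<^sup>2) = 1"
    unfolding s_def by (rule rotation_scale)
  have P: "rotation_to_infinity z = mat2 (of_real s * cnj z) (of_real s) (- of_real s) (of_real s * z)"
    using s_def by (rule rotation_to_infinity_eq)
  have "(complex_of_real s)\<^sup>2 * (1 + z * cnj z) = 1"
    using arg_cong[OF s, of complex_of_real] by (simp add: complex_norm_square[symmetric])
  then have "det (rotation_to_infinity z) = 1"
    by (simp add: P det_2 algebra_simps power2_eq_square)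
  then have h: "h$2$1 = s * (x1 * z + x2)" "h$2$2 = s * (- x1 + x2 * cnj z)"
    "h$1$1 = s * (y1 * z + y2)" "h$1$2 = s * (- y1 + y2 * cnj z)"
    by (simp_all add: h_def conj_by_def matrix_inv_SL2 P x1_def x2_def y1_def y2_def algebra_simps)
  show "(cmod (h$2$1))\<^sup>2 + (cmod (h$2$2))\<^sup>2 = (cmod x1)\<^sup>2 + (cmod x2)\<^sup>2"
    unfolding h by (rule unitary_rows_norm[OF s])
  show "h$1$1 * cnj (h$2$1) + h$1$2 * cnj (h$2$2) = y1 * cnj x1 + y2 * cnj x2"
    unfolding h by (rule unitary_rows_inner[OF s])
qed

lemma rotated_bottom_row_lower_bounds:
  fixes a b c d z :: complex and s \<epsilon> :: real
  defines "N \<equiv> (cmod c)\<^sup>2 + (cmod d)\<^sup>2"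
    and "U \<equiv> (cmod (s * (z * c - a)))\<^sup>2 + (cmod (s * (z * d - b)))\<^sup>2"
  assumes det: "a * d - b * c = 1" and s: "s > 0" and \<epsilon>: "\<epsilon> > 0"
    and far: "\<epsilon>\<^sup>2 * N\<^sup>2 \<le> (cmod (z * N - (a * cnj c + b * cnj d)))\<^sup>2 + 1"
  shows "s\<^sup>2 * \<epsilon>\<^sup>2 * N \<le> U" and "s\<^sup>2 * \<epsilon> \<le> U"
proof -
  have "c \<noteq> 0 \<or> d \<noteq> 0"
    using det by auto
  then have N: "N > 0"
    by (auto simp: N_def add_pos_nonneg add_nonneg_pos)
  define x1 x2 where "x1 = z * c - a" and "x2 = z * d - b"
  have "x1 * cnj c + x2 * cnj d = z * N - (a * cnj c + b * cnj d)"
    by (simp add: x1_def x2_def N_def complex_norm_square[unfolded of_real_power] algebra_simps)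
  moreover have "x1 * d - x2 * c = - 1"
    using det by (simp add: x1_def x2_def algebra_simps)
  ultimately have "((cmod x1)\<^sup>2 + (cmod x2)\<^sup>2) * N = (cmod (z * N - (a * cnj c + b * cnj d)))\<^sup>2 + 1"
    using lagrange_identity_complex[of x1 x2 c d] by (simp add: N_def)
  moreover have "U = s\<^sup>2 * ((cmod x1)\<^sup>2 + (cmod x2)\<^sup>2)"
    by (simp add: U_def x1_def x2_def norm_mult power_mult_distrib distrib_left)
  ultimately have UN: "U * N = s\<^sup>2 * ((cmod (z * N - (a * cnj c + b * cnj d)))\<^sup>2 + 1)"
    by simp
  have "s\<^sup>2 * (\<epsilon>\<^sup>2 * N\<^sup>2) \<le> s\<^sup>2 * ((cmod (z * N - (a * cnj c + b * cnj d)))\<^sup>2 + 1)"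
    using far by (intro mult_left_mono) auto
  then have "s\<^sup>2 * \<epsilon>\<^sup>2 * N * N \<le> U * N"
    unfolding UN by (simp add: power2_eq_square mult_ac)
  then show U1: "s\<^sup>2 * \<epsilon>\<^sup>2 * N \<le> U"
    using N by simp
  have U2: "s\<^sup>2 / N \<le> U"
    using UN N by (simp add: field_simps add_increasing)
  have "(s\<^sup>2 * \<epsilon>)\<^sup>2 = (s\<^sup>2 * \<epsilon>\<^sup>2 * N) * (s\<^sup>2 / N)"
    using N by (simp add: power2_eq_square)
  also have "\<dots> \<le> U * U"
    using U1 U2 N by (intro mult_mono) (auto simp: U_def)
  finally have "(s\<^sup>2 * \<epsilon>)\<^sup>2 \<le> U\<^sup>2"
    by (simp add: power2_eq_square)
  then show "s\<^sup>2 * \<epsilon> \<le> U"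
    by (rule power2_le_imp_le) (simp add: U_def)
qed

lemma cmod_diff_sq_le: "(cmod (p - q))\<^sup>2 \<le> 2 * (cmod p)\<^sup>2 + 2 * (cmod q)\<^sup>2"
proof -
  have "(cmod (p - q))\<^sup>2 \<le> (cmod p + cmod q)\<^sup>2"
    by (intro power_mono norm_triangle_ineq4) auto
  also have "\<dots> \<le> 2 * (cmod p)\<^sup>2 + 2 * (cmod q)\<^sup>2"
    using sum_squares_bound[of "cmod p" "cmod q"] by (simp add: power2_eq_square algebra_simps)
  finally show ?thesis .
qed

lemma rotated_top_row_bound:
  fixes a b c d z :: complex and s \<epsilon> :: real
  defines "N \<equiv> (cmod c)\<^sup>2 + (cmod d)\<^sup>2"
    and "U \<equiv> (cmod (s * (z * c - a)))\<^sup>2 + (cmod (s * (z * d - b)))\<^sup>2"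
  assumes s: "s\<^sup>2 * (1 + (cmod z)\<^sup>2) = 1" "s > 0" and \<epsilon>: "\<epsilon> > 0"
    and U1: "s\<^sup>2 * \<epsilon>\<^sup>2 * N \<le> U"
  shows "cmod ((s * (cnj z * a + c)) * cnj (s * (z * c - a)) + (s * (cnj z * b + d)) * cnj (s * (z * d - b)))
           \<le> sqrt (2 / (s ^ 4 * \<epsilon>\<^sup>2) + 2 * (cmod z)\<^sup>2) * U"
proof -
  define x1 x2 y1 y2 where "x1 = s * (z * c - a)" and "x2 = s * (z * d - b)"
    and "y1 = s * (cnj z * a + c)" and "y2 = s * (cnj z * b + d)"
  define L where "L = 1 / s"
  have "complex_of_real L = s * (1 + z * cnj z)"
    using arg_cong[OF s(1), of complex_of_real] s(2)
    by (simp add: L_def complex_norm_square[symmetric] field_simps power2_eq_square)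
  then have y: "y1 = L * c - cnj z * x1" "y2 = L * d - cnj z * x2"
    by (simp_all add: x1_def x2_def y1_def y2_def algebra_simps)
  have U: "U = (cmod x1)\<^sup>2 + (cmod x2)\<^sup>2"
    by (simp add: U_def x1_def x2_def)
  have "(cmod y1)\<^sup>2 \<le> 2 * (cmod (L * c))\<^sup>2 + 2 * (cmod (cnj z * x1))\<^sup>2"
    "(cmod y2)\<^sup>2 \<le> 2 * (cmod (L * d))\<^sup>2 + 2 * (cmod (cnj z * x2))\<^sup>2"
    unfolding y by (rule cmod_diff_sq_le)+
  then have "(cmod y1)\<^sup>2 + (cmod y2)\<^sup>2 \<le> 2 * L\<^sup>2 * N + 2 * (cmod z)\<^sup>2 * U"
    unfolding U N_def by (simp add: norm_mult power_mult_distrib algebra_simps)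
  also have "\<dots> \<le> 2 * L\<^sup>2 * (U / (s\<^sup>2 * \<epsilon>\<^sup>2)) + 2 * (cmod z)\<^sup>2 * U"
  proof -
    have "N \<le> U / (s\<^sup>2 * \<epsilon>\<^sup>2)"
      using U1 s(2) \<epsilon> by (simp add: field_simps)
    then show ?thesis
      by (intro add_mono mult_left_mono) auto
  qed
  finally have Y: "(cmod y1)\<^sup>2 + (cmod y2)\<^sup>2 \<le> (2 / (s ^ 4 * \<epsilon>\<^sup>2) + 2 * (cmod z)\<^sup>2) * U"
    by (simp add: L_def field_simps power2_eq_square power4_eq_xxxx)
  have "(cmod (y1 * cnj x1 + y2 * cnj x2))\<^sup>2 \<le> ((cmod y1)\<^sup>2 + (cmod y2)\<^sup>2) * U"
    using lagrange_identity_complex[of y1 y2 x1 x2] by (simp add: U)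
  also have "\<dots> \<le> (2 / (s ^ 4 * \<epsilon>\<^sup>2) + 2 * (cmod z)\<^sup>2) * U * U"
    using Y by (intro mult_right_mono) (auto simp: U)
  finally have "cmod (y1 * cnj x1 + y2 * cnj x2) \<le> sqrt ((2 / (s ^ 4 * \<epsilon>\<^sup>2) + 2 * (cmod z)\<^sup>2) * U * U)"
    by (rule real_le_rsqrt)
  also have "\<dots> = sqrt (2 / (s ^ 4 * \<epsilon>\<^sup>2) + 2 * (cmod z)\<^sup>2) * U"
    by (simp add: U real_sqrt_mult mult.assoc flip: power2_eq_square)
  finally show ?thesis
    by (simp add: x1_def x2_def y1_def y2_def)
qed

lemma orbit_in_box_rotation_to_infinity:
  assumes G: "kleinian G" and far: "(\<zeta>, 0) \<notin> closure ((\<lambda>A. hyp_act A base_point) ` G)"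
  shows "\<exists>R. orbit_in_box (conj_by (rotation_to_infinity \<zeta>) ` G) R"
proof -
  define s where "s = 1 / sqrt (1 + (cmod \<zeta>)\<^sup>2)"
  have s: "s > 0" "s\<^sup>2 * (1 + (cmod \<zeta>)\<^sup>2) = 1"
    unfolding s_def by (rule rotation_scale)+
  obtain \<epsilon> where \<epsilon>: "\<epsilon> > 0" and dist: "\<And>g. g \<in> G \<Longrightarrow> \<epsilon> \<le> dist (hyp_act g base_point) (\<zeta>, 0)"
    using far unfolding closure_approachable by (meson not_less image_eqI)
  define K where "K = sqrt (2 / (s ^ 4 * \<epsilon>\<^sup>2) + 2 * (cmod \<zeta>)\<^sup>2)"
  have "orbit_in_box (conj_by (rotation_to_infinity \<zeta>) ` G) (max (1 / (s\<^sup>2 * \<epsilon>)) K)"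
    unfolding orbit_in_box_def
  proof
    fix h
    assume "h \<in> conj_by (rotation_to_infinity \<zeta>) ` G"
    then obtain g where g: "g \<in> G" and h: "h = conj_by (rotation_to_infinity \<zeta>) g"
      by blast
    define N where "N = (cmod (g$2$1))\<^sup>2 + (cmod (g$2$2))\<^sup>2"
    define U where "U = (cmod (s * (\<zeta> * g$2$1 - g$1$1)))\<^sup>2 + (cmod (s * (\<zeta> * g$2$2 - g$1$2)))\<^sup>2"
    have det: "g$1$1 * g$2$2 - g$1$2 * g$2$1 = 1"
      using kleinian_det[OF G g] by (simp add: det_2)
    have "\<epsilon>\<^sup>2 * N\<^sup>2 \<le> (dist (hyp_act g base_point) (\<zeta>, 0))\<^sup>2 * N\<^sup>2"
      using dist[OF g] \<epsilon> by (intro mult_right_mono power_mono) auto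
    then have "\<epsilon>\<^sup>2 * N\<^sup>2 \<le> (cmod (\<zeta> * N - (g$1$1 * cnj (g$2$1) + g$1$2 * cnj (g$2$2))))\<^sup>2 + 1"
      unfolding N_def dist_orbit_point_boundary[OF kleinian_det[OF G g]] .
    then have U1: "s\<^sup>2 * \<epsilon>\<^sup>2 * N \<le> U" and U2: "s\<^sup>2 * \<epsilon> \<le> U"
      using rotated_bottom_row_lower_bounds[OF det s(1) \<epsilon>] by (simp_all add: N_def U_def)
    have "1 \<le> 1 / (s\<^sup>2 * \<epsilon>) * U"
      using U2 s \<epsilon> by (simp add: field_simps)
    moreover have "cmod (h$1$1 * cnj (h$2$1) + h$1$2 * cnj (h$2$2)) \<le> K * U"
      using rotated_top_row_bound[OF s(2,1) \<epsilon> U1[unfolded N_def U_def]]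
      by (simp add: h conj_by_rotation_to_infinity_rows[OF s_def] K_def U_def)
    moreover have "(cmod (h$2$1))\<^sup>2 + (cmod (h$2$2))\<^sup>2 = U"
      by (simp add: h conj_by_rotation_to_infinity_rows[OF s_def] U_def)
    ultimately show "1 \<le> max (1 / (s\<^sup>2 * \<epsilon>)) K * ((cmod (h$2$1))\<^sup>2 + (cmod (h$2$2))\<^sup>2) \<and>
      cmod (h$1$1 * cnj (h$2$1) + h$1$2 * cnj (h$2$2))
        \<le> max (1 / (s\<^sup>2 * \<epsilon>)) K * ((cmod (h$2$1))\<^sup>2 + (cmod (h$2$2))\<^sup>2)"
      using U2 s \<epsilon> by (smt (verit) max.cobounded1 max.cobounded2 mult_right_mono zero_le_power2
          mult_nonneg_nonneg)
  qed
  then show ?thesis ..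
qed

lemma invertible_segment_to_rotation:
  assumes "0 \<le> r"
  shows "invertible ((1 - r) *\<^sub>R mat 1 + r *\<^sub>R rotation_to_infinity z)"
proof (cases "r = 0")
  case True
  then show ?thesis
    by (simp add: invertible_det_nz)
next
  case False
  define s where "s = 1 / sqrt (1 + (cmod z)\<^sup>2)"
  define w where "w = complex_of_real (1 - r) + of_real (r * s) * z"
  have "(1 - r) *\<^sub>R mat 1 + r *\<^sub>R rotation_to_infinity z = mat2 (cnj w) (of_real (r * s)) (- of_real (r * s)) w"
    by (simp add: rotation_to_infinity_eq[OF s_def] cmat_eq_iff w_def)
      (simp add: scaleR_conv_of_real algebra_simps)
  then have "det ((1 - r) *\<^sub>R mat 1 + r *\<^sub>R rotation_to_infinity z) = w * cnj w + of_real ((r * s)\<^sup>2)"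
    by (simp add: det_2 power2_eq_square)
  also have "\<dots> = of_real ((cmod w)\<^sup>2 + (r * s)\<^sup>2)"
    by (simp only: of_real_add complex_norm_square)
  finally show ?thesis
    using False rotation_scale(1)[of z, folded s_def]
    by (simp add: invertible_det_nz add_nonneg_pos del: of_real_add)
qed

lemma kleinian_conjugate_orbit_in_box:
  assumes G: "kleinian G" and \<Omega>: "domain_of_discontinuity G \<noteq> {}"
  obtains Rp :: "real \<Rightarrow> cmat" and R :: real
  where "\<And>r. isCont Rp r" "Rp 0 = mat 1" "\<And>r. 0 \<le> r \<Longrightarrow> r \<le> 1 \<Longrightarrow> invertible (Rp r)"
    "orbit_in_box (conj_by (Rp 1) ` G) R"
proof -
  obtain \<xi> where \<xi>: "\<xi> \<notin> limit_set G"
    using \<Omega> by (auto simp: domain_of_discontinuity_def)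
  show ?thesis
  proof (cases \<xi>)
    case None
    then have "bounded ((\<lambda>A. hyp_act A base_point) ` G)"
      using \<xi> by (auto simp: limit_set_def split: if_splits)
    then obtain R where "orbit_in_box G R"
      using bounded_orbit_imp_orbit_in_box[OF G] by blast
    then show ?thesis
      by (intro that[of "\<lambda>_. mat 1" R]) (auto simp: conj_by_id invertible_det_nz)
  next
    case (Some \<zeta>)
    then have "(\<zeta>, 0) \<notin> closure ((\<lambda>A. hyp_act A base_point) ` G)"
      using \<xi> by (auto simp: limit_set_def)
    then obtain R where "orbit_in_box (conj_by (rotation_to_infinity \<zeta>) ` G) R"
      using orbit_in_box_rotation_to_infinity[OF G] by blast
    then show ?thesis
      by (intro that[of "\<lambda>r. (1 - r) *\<^sub>R mat 1 + r *\<^sub>R rotation_to_infinity \<zeta>" R])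
        (auto intro!: continuous_intros invertible_segment_to_rotation)
  qed
qed

section \<open>Collapsing a group to the trivial group\<close>

text \<open>First conjugate along \<open>Rp\<close> (for \<open>t \<le> 1/2\<close>), then shrink the result by the dilations
  \<open>z \<mapsto> m z\<close>, \<open>m = 2 - 2t\<close>, down to the trivial group at \<open>t = 1\<close>.\<close>
definition collapse_conjugator :: "(real \<Rightarrow> cmat) \<Rightarrow> real \<Rightarrow> cmat" where
  "collapse_conjugator Rp t = dilation (min 1 (2 - 2 * t)) ** Rp (min 1 (2 * t))"

definition collapse_path :: "(real \<Rightarrow> cmat) \<Rightarrow> cmat set \<Rightarrow> real \<Rightarrow> cmat set" where
  "collapse_path Rp G t = (if t < 1 then conj_by (collapse_conjugator Rp t) ` G else pm_one)"

context
  fixes Rp :: "real \<Rightarrow> cmat" and G :: "cmat set"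
  assumes Rp_cont: "\<And>r. isCont Rp r" and Rp_0: "Rp 0 = mat 1"
    and Rp_invertible: "\<And>r. 0 \<le> r \<Longrightarrow> r \<le> 1 \<Longrightarrow> invertible (Rp r)"
    and G: "kleinian G"
begin

lemma invertible_collapse_conjugator: "0 \<le> t \<Longrightarrow> t < 1 \<Longrightarrow> invertible (collapse_conjugator Rp t)"
  unfolding collapse_conjugator_def by (intro invertible_mult invertible_dilation Rp_invertible) auto

lemma tendsto_collapse_conjugator:
  "(s \<longlongrightarrow> t) F \<Longrightarrow> ((\<lambda>x. collapse_conjugator Rp (s x)) \<longlongrightarrow> collapse_conjugator Rp t) F"
  unfolding collapse_conjugator_def dilation_def
  by (intro tendsto_matrix_mult tendsto_mat2 isCont_tendsto_compose[OF Rp_cont] tendsto_intros)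

lemma kleinian_collapse_path: "0 \<le> t \<Longrightarrow> t \<le> 1 \<Longrightarrow> kleinian (collapse_path Rp G t)"
  by (simp add: collapse_path_def kleinian_conj_by invertible_collapse_conjugator G kleinian_pm_one)

lemma collapse_path_0: "collapse_path Rp G 0 = G"
proof -
  have "collapse_conjugator Rp 0 = mat 1"
    by (simp add: collapse_conjugator_def Rp_0 dilation_def cmat_eq_iff)
  then show ?thesis
    by (simp add: collapse_path_def conj_by_id)
qed

lemma collapse_path_1: "collapse_path Rp G 1 = pm_one"
  by (simp add: collapse_path_def)

lemma collapse_path_nonempty: "collapse_path Rp G t \<noteq> {}"
  using kleinian_mat_1[OF G] by (auto simp: collapse_path_def pm_one_def)

lemma chabauty_conv_collapse_path_interior:
  assumes t: "0 \<le> t" "t < 1" and s: "s \<longlonglongrightarrow> t"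
  shows "chabauty_conv (collapse_path Rp G \<circ> s) (collapse_path Rp G t)"
proof (rule chabauty_conv_eventually_cong)
  show "chabauty_conv (\<lambda>n. conj_by (collapse_conjugator Rp (s n)) ` G) (collapse_path Rp G t)"
    using t by (simp add: collapse_path_def chabauty_conv_conj_by kleinian_closed[OF G]
        tendsto_collapse_conjugator[OF s] invertible_collapse_conjugator)
  show "\<forall>\<^sub>F n in sequentially. conj_by (collapse_conjugator Rp (s n)) ` G = (collapse_path Rp G \<circ> s) n"
    using order_tendstoD(2)[OF s t(2)] by eventually_elim (simp add: collapse_path_def)
qed (use kleinian_mat_1[OF G] collapse_path_nonempty in auto)

lemma collapse_path_second_half:
  assumes "1 / 2 \<le> t" and "t \<le> 1"
  shows "collapse_path Rp G t = (if t = 1 then pm_one else conj_by (dilation (2 - 2 * t)) ` conj_by (Rp 1) ` G)"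
proof (cases "t = 1")
  case False
  then have "collapse_conjugator Rp t = dilation (2 - 2 * t) ** Rp 1"
    using assms by (simp add: collapse_conjugator_def)
  moreover have "invertible (dilation (2 - 2 * t))"
    using False by (intro invertible_dilation) simp
  ultimately show ?thesis
    using False assms Rp_invertible[of 1] by (simp add: collapse_path_def image_image conj_by_conj_by)
qed (simp add: collapse_path_def)

lemma chabauty_conv_collapse_path_end:
  assumes box: "orbit_in_box (conj_by (Rp 1) ` G) R"
    and s: "\<And>n. s n \<le> 1" "s \<longlonglongrightarrow> 1"
  shows "chabauty_conv (collapse_path Rp G \<circ> s) pm_one"
proof (rule chabauty_conv_eventually_cong)
  show "chabauty_conv (\<lambda>n. if 2 - 2 * s n = 0 then pm_one
      else conj_by (dilation (2 - 2 * s n)) ` conj_by (Rp 1) ` G) pm_one"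
    using s by (intro chabauty_conv_dilation_collapse[OF kleinian_conj_by[OF Rp_invertible G] box])
      (auto intro!: tendsto_eq_intros)
  have "\<forall>\<^sub>F n in sequentially. 1 / 2 < s n"
    using order_tendstoD(1)[OF s(2), of "1 / 2"] by simp
  then show "\<forall>\<^sub>F n in sequentially. (if 2 - 2 * s n = 0 then pm_one
      else conj_by (dilation (2 - 2 * s n)) ` conj_by (Rp 1) ` G) = (collapse_path Rp G \<circ> s) n"
    by eventually_elim (simp add: collapse_path_second_half s(1))
qed (use kleinian_mat_1[OF G] collapse_path_nonempty in \<open>auto simp: pm_one_def\<close>)

lemma geom_path_collapse_path:
  assumes "orbit_in_box (conj_by (Rp 1) ` G) R"
  shows "geom_path (collapse_path Rp G)"
  unfolding geom_path_def
proof (intro conjI ballI allI impI)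
  show "kleinian (collapse_path Rp G t)" if "t \<in> {0..1}" for t
    using that by (simp add: kleinian_collapse_path)
  show "chabauty_conv (collapse_path Rp G \<circ> s) (collapse_path Rp G t)"
    if "t \<in> {0..1}" and "(\<forall>n. s n \<in> {0..1}) \<and> s \<longlonglongrightarrow> t" for t s
  proof (cases "t < 1")
    case True
    then show ?thesis
      using that by (intro chabauty_conv_collapse_path_interior) auto
  next
    case False
    then show ?thesis
      using that chabauty_conv_collapse_path_end[OF assms] by (auto simp: collapse_path_1)
  qed
qed

end

theorem mainTheorem6:
  fixes \<Gamma> :: "cmat set"
  assumes "kleinian \<Gamma>"
    and "domain_of_discontinuity \<Gamma> \<noteq> {}"
  shows "\<exists>\<gamma>. geom_path \<gamma> \<and> \<gamma> 0 = \<Gamma> \<and> \<gamma> 1 = pm_one"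
proof -
  obtain Rp :: "real \<Rightarrow> cmat" and R :: real
    where "\<And>r. isCont Rp r" "Rp 0 = mat 1" "\<And>r. 0 \<le> r \<Longrightarrow> r \<le> 1 \<Longrightarrow> invertible (Rp r)"
    and "orbit_in_box (conj_by (Rp 1) ` \<Gamma>) R"
    using kleinian_conjugate_orbit_in_box[OF assms] by blast
  then show ?thesis
    using geom_path_collapse_path collapse_path_0 collapse_path_1 assms(1) by blast
qed

end
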